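(* Let $\mu$ be a distribution on $\Sigma\times\Gamma\times\Phi$ (finite sets). If $\mu$ has no $\mathbb{Z}$-embeddings, then $\mu$ is pairwise-connected.
   Context: An embedding of $\mu$ into an Abelian group $A$ is a triple of maps $\mathsf{a}:\Sigma\to A$, $\mathsf{b}:\Gamma\to A$, $\mathsf{c}:\Phi\to A$ with $\mathsf{a}(x)+\mathsf{b}(y)+\mathsf{c}(z)=0$ for all $(x,y,z)\in\mathsf{supp}(\mu)$; $\mu$ has no $\mathbb{Z}$-embeddings if every embedding into $(\mathbb{Z},+)$ consists of constant maps. $\mu$ is $(x,y)$-pairwise-connected if the bipartite graph on vertex set $\Sigma\sqcup\Gamma$, with an edge between $x\in\Sigma$ and $y\in\Gamma$ whenever there is $z$ with $(x,y,z)\in\mathsf{supp}(\mu)$, is connected; $(y,z)$- and $(x,z)$-pairwise-connectivity are defined analogously; $\mu$ is pairwise-connected if it is $(x,y)$-, $(y,z)$- and $(x,z)$-pairwise-connected. *)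

theory Defs
  imports "HOL-Probability.Probability_Mass_Function"
begin

definition Z_embedding ::
  "('a \<times> 'b \<times> 'c) pmf \<Rightarrow> ('a \<Rightarrow> int) \<Rightarrow> ('b \<Rightarrow> int) \<Rightarrow> ('c \<Rightarrow> int) \<Rightarrow> bool" where
  "Z_embedding mu a b c \<longleftrightarrow> (\<forall>x y z. (x, y, z) \<in> set_pmf mu \<longrightarrow> a x + b y + c z = 0)"

definition no_Z_embeddings :: "('a \<times> 'b \<times> 'c) pmf \<Rightarrow> bool" where
  "no_Z_embeddings mu \<longleftrightarrow>
     (\<forall>a b c. Z_embedding mu a b c \<longrightarrow>
        (\<exists>k. a = (\<lambda>_. k)) \<and> (\<exists>k. b = (\<lambda>_. k)) \<and> (\<exists>k. c = (\<lambda>_. k)))"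

definition bip_edge :: "('p \<times> 'q) set \<Rightarrow> 'p + 'q \<Rightarrow> 'p + 'q \<Rightarrow> bool" where
  "bip_edge R s t \<longleftrightarrow> (\<exists>p q. (p, q) \<in> R \<and> ((s = Inl p \<and> t = Inr q) \<or> (s = Inr q \<and> t = Inl p)))"

definition bip_connected :: "('p \<times> 'q) set \<Rightarrow> bool" where
  "bip_connected R \<longleftrightarrow> (\<forall>s t. (bip_edge R)\<^sup>*\<^sup>* s t)"

definition xy_connected :: "('a \<times> 'b \<times> 'c) pmf \<Rightarrow> bool" where
  "xy_connected mu \<longleftrightarrow> bip_connected ((\<lambda>(x, y, z). (x, y)) ` set_pmf mu)"

definition yz_connected :: "('a \<times> 'b \<times> 'c) pmf \<Rightarrow> bool" where
  "yz_connected mu \<longleftrightarrow> bip_connected ((\<lambda>(x, y, z). (y, z)) ` set_pmf mu)"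

definition xz_connected :: "('a \<times> 'b \<times> 'c) pmf \<Rightarrow> bool" where
  "xz_connected mu \<longleftrightarrow> bip_connected ((\<lambda>(x, y, z). (x, z)) ` set_pmf mu)"

definition pairwise_connected :: "('a \<times> 'b \<times> 'c) pmf \<Rightarrow> bool" where
  "pairwise_connected mu \<longleftrightarrow> xy_connected mu \<and> yz_connected mu \<and> xz_connected mu"

end

theory Submission
  imports Defs
begin

text \<open>If the bipartite graph of a relation is disconnected, the indicator of a connected
  component, taken with sign \<open>+1\<close> on the left and \<open>-1\<close> on the right, is a non-constant
  integer solution of \<open>a p + b q = 0\<close> on the edges. Every pairwise projection of a
  \<open>\<int>\<close>-embedding-free distribution admits only constant solutions, so it is connected.\<close>

definition Z_rigid :: "('p \<times> 'q) set \<Rightarrow> bool" where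
  "Z_rigid R \<longleftrightarrow>
     (\<forall>a b. (\<forall>(p, q) \<in> R. a p + b q = (0::int)) \<longrightarrow> (\<exists>k. a = (\<lambda>_. k)) \<and> (\<exists>k. b = (\<lambda>_. k)))"

lemma bip_edge_reachable_iff:
  assumes "(p, q) \<in> R"
  shows "(bip_edge R)\<^sup>*\<^sup>* s (Inl p) \<longleftrightarrow> (bip_edge R)\<^sup>*\<^sup>* s (Inr q)"
proof -
  have "bip_edge R (Inl p) (Inr q)" and "bip_edge R (Inr q) (Inl p)"
    using assms unfolding bip_edge_def by blast+
  then show ?thesis
    by (meson rtranclp.rtrancl_into_rtrancl)
qed

lemma bip_connected_if_Z_rigid:
  assumes "R \<noteq> {}" and "Z_rigid R"
  shows "bip_connected R"
  unfolding bip_connected_def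
proof (intro allI)
  fix s t
  let ?reach = "(bip_edge R)\<^sup>*\<^sup>* s"
  define a :: "_ \<Rightarrow> int" where "a p = of_bool (?reach (Inl p))" for p
  define b :: "_ \<Rightarrow> int" where "b q = - of_bool (?reach (Inr q))" for q
  have solution: "\<forall>(p, q) \<in> R. a p + b q = 0"
    by (auto simp: a_def b_def bip_edge_reachable_iff)
  then obtain k l where a: "\<And>p. a p = k" and b: "\<And>q. b q = l"
    using \<open>Z_rigid R\<close> unfolding Z_rigid_def by metis
  obtain p0 q0 where "(p0, q0) \<in> R"
    using \<open>R \<noteq> {}\<close> by auto
  then have "k + l = 0"
    using solution a b by auto
  moreover have "?reach s" by simp
  ultimately have "k = 1"
    using a[of "projl s"] b[of "projr s"] by (cases s) (auto simp: a_def b_def)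
  then have "?reach v" for v
    using a[of "projl v"] b[of "projr v"] \<open>k + l = 0\<close> by (cases v) (auto simp: a_def b_def)
  then show "?reach t" .
qed

lemma Z_rigid_projections:
  assumes "no_Z_embeddings mu"
  shows "Z_rigid ((\<lambda>(x, y, z). (x, y)) ` set_pmf mu)"
    and "Z_rigid ((\<lambda>(x, y, z). (y, z)) ` set_pmf mu)"
    and "Z_rigid ((\<lambda>(x, y, z). (x, z)) ` set_pmf mu)"
proof -
  have const: "(\<exists>k. a = (\<lambda>_. k)) \<and> (\<exists>k. b = (\<lambda>_. k)) \<and> (\<exists>k. c = (\<lambda>_. k))"
    if "Z_embedding mu a b c" for a b c
    using assms that unfolding no_Z_embeddings_def by blast
  show "Z_rigid ((\<lambda>(x, y, z). (x, y)) ` set_pmf mu)"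
    unfolding Z_rigid_def using const[of _ _ "\<lambda>_. 0"] by (fastforce simp: Z_embedding_def)
  show "Z_rigid ((\<lambda>(x, y, z). (y, z)) ` set_pmf mu)"
    unfolding Z_rigid_def using const[of "\<lambda>_. 0"] by (fastforce simp: Z_embedding_def)
  show "Z_rigid ((\<lambda>(x, y, z). (x, z)) ` set_pmf mu)"
    unfolding Z_rigid_def using const[of _ "\<lambda>_. 0"] by (fastforce simp: Z_embedding_def)
qed

theorem lemma1p3:
  fixes mu :: "('a::finite \<times> 'b::finite \<times> 'c::finite) pmf"
  assumes "no_Z_embeddings mu"
  shows "pairwise_connected mu"
  unfolding pairwise_connected_def xy_connected_def yz_connected_def xz_connected_def
  using Z_rigid_projections[OF assms] set_pmf_not_empty[of mu]
  by (intro conjI bip_connected_if_Z_rigid) auto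

end
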